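(* Let $\Gamma$ be a finite multiset of ${\sf Frm_2}$-formulas and $\Delta$ a finite multiset of ${\sf Frm}$-formulas. If $\Gamma\Rightarrow\Delta$ is derivable in ${\sf GWF_{N_2}}$, then $\Gamma\Rightarrow\bigvee\Delta$ is derivable in ${\sf GWF^s_{N_2}}$.
   Context: Language: countably many atoms $p,q,\dots$, the constant $\bot$, and binary connectives $\wedge,\vee,\rightarrow$ ($\rightarrow$ is strict implication). ${\sf Frm}$ is the set of formulas built from atoms and $\bot$ with $\wedge,\vee,\rightarrow$; $A,B,C,D$ range over ${\sf Frm}$. Let $\supset$ be a new binary symbol (material implication) and ${\sf Frm_1}={\sf Frm}\cup\{A\supset B : A,B\in{\sf Frm}\}$ (no nesting of $\supset$). ${\sf Frm_2}$ is the smallest set containing ${\sf Frm_1}$ and closed under $\wedge$ and $\vee$; $X,Y,Z$ range over ${\sf Frm_2}$. Multi-succedent sequents are $\Gamma\Rightarrow\Delta$ with $\Gamma,\Delta$ finite multisets of ${\sf Frm_2}$-formulas. The calculus ${\sf GWF_{N_2}}$ has initial sequents $(id)$ $p,\Gamma\Rightarrow\Delta,p$ ($p$ an atom) and $(L_\bot)$ $\bot,\Gamma\Rightarrow\Delta$, and rules (premises / conclusion): $(L_\wedge)$ $X,Y,\Gamma\Rightarrow\Delta$ / $X\wedge Y,\Gamma\Rightarrow\Delta$; $(R_\wedge)$ $\Gamma\Rightarrow\Delta,X$ and $\Gamma\Rightarrow\Delta,Y$ / $\Gamma\Rightarrow\Delta,X\wedge Y$; $(L_\vee)$ $X,\Gamma\Rightarrow\Delta$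 and $Y,\Gamma\Rightarrow\Delta$ / $X\vee Y,\Gamma\Rightarrow\Delta$; $(R_\vee)$ $\Gamma\Rightarrow\Delta,X,Y$ / $\Gamma\Rightarrow\Delta,X\vee Y$; $(L_\supset)$ $\Gamma\Rightarrow\Delta,A$ and $B,\Gamma\Rightarrow\Delta$ / $A\supset B,\Gamma\Rightarrow\Delta$; $(R_\supset)$ $A,\Gamma\Rightarrow\Delta,B$ / $\Gamma\Rightarrow\Delta,A\supset B$; $(LR_\rightarrow)$ $C\supset D,A\Rightarrow B$ / $\Gamma,C\rightarrow D\Rightarrow\Delta,A\rightarrow B$; $(R_\rightarrow)$ $A\Rightarrow B$ / $\Gamma\Rightarrow\Delta,A\rightarrow B$. The single-succedent calculus ${\sf GWF^s_{N_2}}$ (sequents $\Gamma\Rightarrow Z$, $Z\in{\sf Frm_2}$) has initial sequents $(id^s)$ $p,\Gamma\Rightarrow p$ and $(L^s_\bot)$ $\bot,\Gamma\Rightarrow Z$, and rules: $(L^s_\wedge)$ $X,Y,\Gamma\Rightarrow Z$ / $X\wedge Y,\Gamma\Rightarrow Z$; $(R^s_\wedge)$ $\Gamma\Rightarrow X$ and $\Gamma\Rightarrow Y$ / $\Gamma\Rightarrow X\wedge Y$; $(L^s_\vee)$ $X,\Gamma\Rightarrow Z$ and $Y,\Gamma\Rightarrow Z$ / $X\vee Y,\Gamma\Rightarrow Z$; $(R^s_{\vee_l})$ $\Gamma\Rightarrow X$ / $\Gamma\Rightarrow X\vee Y$; $(R^s_{\vee_r})$ $\Gamma\Rightarrow Y$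 / $\Gamma\Rightarrow X\vee Y$; $(L^s_\supset)$ $A\supset B,\Gamma\Rightarrow A$ and $B,\Gamma\Rightarrow Z$ / $A\supset B,\Gamma\Rightarrow Z$; $(R^s_\supset)$ $A,\Gamma\Rightarrow B$ / $\Gamma\Rightarrow A\supset B$; $(LR^s_\rightarrow)$ $C\supset D,A\Rightarrow B$ / $\Gamma,C\rightarrow D\Rightarrow A\rightarrow B$; $(R^s_\rightarrow)$ $A\Rightarrow B$ / $\Gamma\Rightarrow A\rightarrow B$. In all rules $A,B,C,D\in{\sf Frm}$, $X,Y,Z\in{\sf Frm_2}$, $\Gamma,\Delta$ arbitrary finite multisets of ${\sf Frm_2}$-formulas. $\bigvee\Delta$ is the disjunction of the members of $\Delta$ (the empty disjunction being $\bot$). *)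

theory Defs
  imports Main "HOL-Library.Multiset"
begin

(* Formulas of Frm_2: atoms, bottom, conjunction, disjunction,
   strict implication (Imp) and material implication (MImp). *)
datatype fm = Atom nat | Bot | And fm fm | Or fm fm | Imp fm fm | MImp fm fm

fun isFrm :: "fm \<Rightarrow> bool" where
  "isFrm (Atom p) = True"
| "isFrm Bot = True"
| "isFrm (And A B) = (isFrm A \<and> isFrm B)"
| "isFrm (Or A B) = (isFrm A \<and> isFrm B)"
| "isFrm (Imp A B) = (isFrm A \<and> isFrm B)"
| "isFrm (MImp A B) = False"

definition isFrm1 :: "fm \<Rightarrow> bool" where
  "isFrm1 X \<longleftrightarrow> isFrm X \<or> (\<exists>A B. X = MImp A B \<and> isFrm A \<and> isFrm B)"

inductive isFrm2 :: "fm \<Rightarrow> bool" where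
  base: "isFrm1 X \<Longrightarrow> isFrm2 X"
| conj: "isFrm2 X \<Longrightarrow> isFrm2 Y \<Longrightarrow> isFrm2 (And X Y)"
| disj: "isFrm2 X \<Longrightarrow> isFrm2 Y \<Longrightarrow> isFrm2 (Or X Y)"

definition wfms :: "fm multiset \<Rightarrow> bool" where
  "wfms M \<longleftrightarrow> (\<forall>X\<in>#M. isFrm2 X)"

inductive GWF :: "fm multiset \<Rightarrow> fm multiset \<Rightarrow> bool" where
  id: "wfms \<Gamma> \<Longrightarrow> wfms \<Delta> \<Longrightarrow> GWF (add_mset (Atom p) \<Gamma>) (add_mset (Atom p) \<Delta>)"
| L_bot: "wfms \<Gamma> \<Longrightarrow> wfms \<Delta> \<Longrightarrow> GWF (add_mset Bot \<Gamma>) \<Delta>"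
| L_and: "GWF (add_mset X (add_mset Y \<Gamma>)) \<Delta> \<Longrightarrow> GWF (add_mset (And X Y) \<Gamma>) \<Delta>"
| R_and: "GWF \<Gamma> (add_mset X \<Delta>) \<Longrightarrow> GWF \<Gamma> (add_mset Y \<Delta>) \<Longrightarrow> GWF \<Gamma> (add_mset (And X Y) \<Delta>)"
| L_or: "GWF (add_mset X \<Gamma>) \<Delta> \<Longrightarrow> GWF (add_mset Y \<Gamma>) \<Delta> \<Longrightarrow> GWF (add_mset (Or X Y) \<Gamma>) \<Delta>"
| R_or: "GWF \<Gamma> (add_mset X (add_mset Y \<Delta>)) \<Longrightarrow> GWF \<Gamma> (add_mset (Or X Y) \<Delta>)"
| L_mimp: "isFrm A \<Longrightarrow> isFrm B \<Longrightarrow> GWF \<Gamma> (add_mset A \<Delta>) \<Longrightarrow> GWF (add_mset B \<Gamma>) \<Delta>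
           \<Longrightarrow> GWF (add_mset (MImp A B) \<Gamma>) \<Delta>"
| R_mimp: "isFrm A \<Longrightarrow> isFrm B \<Longrightarrow> GWF (add_mset A \<Gamma>) (add_mset B \<Delta>)
           \<Longrightarrow> GWF \<Gamma> (add_mset (MImp A B) \<Delta>)"
| LR_imp: "isFrm A \<Longrightarrow> isFrm B \<Longrightarrow> isFrm C \<Longrightarrow> isFrm D \<Longrightarrow> wfms \<Gamma> \<Longrightarrow> wfms \<Delta> \<Longrightarrow>
           GWF {#MImp C D, A#} {#B#} \<Longrightarrow> GWF (add_mset (Imp C D) \<Gamma>) (add_mset (Imp A B) \<Delta>)"
| R_imp: "isFrm A \<Longrightarrow> isFrm B \<Longrightarrow> wfms \<Gamma> \<Longrightarrow> wfms \<Delta> \<Longrightarrow>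
           GWF {#A#} {#B#} \<Longrightarrow> GWF \<Gamma> (add_mset (Imp A B) \<Delta>)"

inductive GWFs :: "fm multiset \<Rightarrow> fm \<Rightarrow> bool" where
  id: "wfms \<Gamma> \<Longrightarrow> GWFs (add_mset (Atom p) \<Gamma>) (Atom p)"
| L_bot: "wfms \<Gamma> \<Longrightarrow> isFrm2 Z \<Longrightarrow> GWFs (add_mset Bot \<Gamma>) Z"
| L_and: "GWFs (add_mset X (add_mset Y \<Gamma>)) Z \<Longrightarrow> GWFs (add_mset (And X Y) \<Gamma>) Z"
| R_and: "GWFs \<Gamma> X \<Longrightarrow> GWFs \<Gamma> Y \<Longrightarrow> GWFs \<Gamma> (And X Y)"
| L_or: "GWFs (add_mset X \<Gamma>) Z \<Longrightarrow> GWFs (add_mset Y \<Gamma>) Z \<Longrightarrow> GWFs (add_mset (Or X Y) \<Gamma>) Z"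
| R_or_l: "isFrm2 Y \<Longrightarrow> GWFs \<Gamma> X \<Longrightarrow> GWFs \<Gamma> (Or X Y)"
| R_or_r: "isFrm2 X \<Longrightarrow> GWFs \<Gamma> Y \<Longrightarrow> GWFs \<Gamma> (Or X Y)"
| L_mimp: "isFrm A \<Longrightarrow> isFrm B \<Longrightarrow> GWFs (add_mset (MImp A B) \<Gamma>) A \<Longrightarrow> GWFs (add_mset B \<Gamma>) Z
           \<Longrightarrow> GWFs (add_mset (MImp A B) \<Gamma>) Z"
| R_mimp: "isFrm A \<Longrightarrow> isFrm B \<Longrightarrow> GWFs (add_mset A \<Gamma>) B \<Longrightarrow> GWFs \<Gamma> (MImp A B)"
| LR_imp: "isFrm A \<Longrightarrow> isFrm B \<Longrightarrow> isFrm C \<Longrightarrow> isFrm D \<Longrightarrow> wfms \<Gamma> \<Longrightarrow>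
           GWFs {#MImp C D, A#} B \<Longrightarrow> GWFs (add_mset (Imp C D) \<Gamma>) (Imp A B)"
| R_imp: "isFrm A \<Longrightarrow> isFrm B \<Longrightarrow> wfms \<Gamma> \<Longrightarrow>
           GWFs {#A#} B \<Longrightarrow> GWFs \<Gamma> (Imp A B)"

fun bigOr :: "fm list \<Rightarrow> fm" where
  "bigOr [] = Bot"
| "bigOr [A] = A"
| "bigOr (A # B # xs) = Or A (bigOr (B # xs))"

end

theory Submission
  imports Defs
begin

text \<open>
  A multi-succedent sequent \<open>\<Gamma> \<Rightarrow> \<Delta>\<close> is read in the single-succedent calculus through
  \<open>\<or>\<close>-elimination: for every extension \<open>\<Gamma>, \<Sigma>\<close> of the antecedent and every goal \<open>Z\<close>,
  if each member of \<open>\<Delta>\<close> yields \<open>Z\<close> over every extension of \<open>\<Gamma>, \<Sigma>\<close>, then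
  \<open>\<Gamma>, \<Sigma> \<Rightarrow> Z\<close>. Every rule of \<open>GWF\<^sub>N\<^sub>2\<close> preserves this reading without any cut.
  The right rules only need admissible weakening; the left rules keep their principal formula
  in \<open>\<Sigma>\<close> (so that the hypotheses about \<open>\<Delta>\<close> still apply) and remove the extra copy by
  admissible contraction, which in turn follows from the invertibility of the left rules for
  \<open>\<and>\<close>, \<open>\<or>\<close> and \<open>\<supset>\<close> by induction on the contracted formula. Taking \<open>Z = \<Or>\<Delta>\<close>, which
  each member of \<open>\<Delta>\<close> yields by \<open>\<or>\<close>-introduction, gives the theorem.
\<close>

lemma isFrm2_if_isFrm: "isFrm A \<Longrightarrow> isFrm2 A"
  by (auto intro: isFrm2.base simp: isFrm1_def)

lemma isFrm2_simps [simp]: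
  "isFrm2 (Atom p)"
  "isFrm2 Bot"
  "isFrm2 (And X Y) \<longleftrightarrow> isFrm2 X \<and> isFrm2 Y"
  "isFrm2 (Or X Y) \<longleftrightarrow> isFrm2 X \<and> isFrm2 Y"
  "isFrm2 (Imp A B) \<longleftrightarrow> isFrm A \<and> isFrm B"
  "isFrm2 (MImp A B) \<longleftrightarrow> isFrm A \<and> isFrm B"
  by (subst isFrm2.simps; auto simp: isFrm1_def intro: isFrm2_if_isFrm)+

lemma wfms_simps [simp]:
  "wfms {#}"
  "wfms (add_mset X \<Gamma>) \<longleftrightarrow> isFrm2 X \<and> wfms \<Gamma>"
  "wfms (\<Gamma> + \<Gamma>') \<longleftrightarrow> wfms \<Gamma> \<and> wfms \<Gamma>'"
  by (auto simp: wfms_def)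

lemma wfms_subset: "wfms \<Gamma>' \<Longrightarrow> \<Gamma> \<subseteq># \<Gamma>' \<Longrightarrow> wfms \<Gamma>"
  by (auto simp: wfms_def dest: mset_subset_eqD)

lemma GWFs_wf: "GWFs \<Gamma> Z \<Longrightarrow> wfms \<Gamma> \<and> isFrm2 Z"
  by (induction rule: GWFs.induct) (auto simp: isFrm2_if_isFrm)

lemma GWFs_weaken_plus: "GWFs \<Gamma> Z \<Longrightarrow> wfms \<Delta> \<Longrightarrow> GWFs (\<Gamma> + \<Delta>) Z"
  by (induction rule: GWFs.induct) (auto intro: GWFs.intros)

lemma GWFs_weaken: "GWFs \<Gamma> Z \<Longrightarrow> \<Gamma> \<subseteq># \<Gamma>' \<Longrightarrow> wfms \<Gamma>' \<Longrightarrow> GWFs \<Gamma>' Z"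
  by (metis GWFs_weaken_plus subset_mset.add_diff_inverse wfms_simps(3))

lemma add_mset_eq_add_mset_twice_cases:
  assumes "add_mset F G = add_mset X (add_mset X \<Gamma>)"
  obtains "X = F" "G = add_mset X \<Gamma>"
    | K where "G = add_mset X (add_mset X K)" "\<Gamma> = add_mset F K"
  using assms by (auto simp: add_eq_conv_ex)

lemma add_mset_eq_add_mset_twice_obtain:
  assumes "add_mset F G = add_mset X (add_mset X \<Gamma>)"
  obtains K where "add_mset X \<Gamma> = add_mset F K" "K \<subseteq># G"
  using assms by (cases rule: add_mset_eq_add_mset_twice_cases) auto

text \<open>The left premise of the rule for \<open>A \<supset> B\<close> keeps the principal formula, so only
  the right premise is an inversion.\<close>

inductive left_premise :: "fm \<Rightarrow> fm multiset \<Rightarrow> bool" where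
  "left_premise (And X Y) {#X, Y#}"
| "left_premise (Or X Y) {#X#}"
| "left_premise (Or X Y) {#Y#}"
| "left_premise (MImp A B) {#B#}"

lemma wfms_left_premise: "left_premise H N \<Longrightarrow> isFrm2 H \<Longrightarrow> wfms N"
  by (induction rule: left_premise.induct) (auto simp: isFrm2_if_isFrm)

lemma GWFs_left_premise:
  assumes "GWFs (add_mset H \<Gamma>) Z" and H: "left_premise H N"
  shows "GWFs (N + \<Gamma>) Z"
proof -
  have wfN: "wfms N"
    using GWFs_wf[OF assms(1)] wfms_left_premise[OF H] by simp
  have not_axiom: "H \<noteq> Atom p" "H \<noteq> Bot" "H \<noteq> Imp C D" for p C D
    using H by (auto elim: left_premise.cases)
  from assms(1) show ?thesis
  proof (induction "add_mset H \<Gamma>" Z arbitrary: \<Gamma> rule: GWFs.induct)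
    case (id G p)
    then obtain K where "\<Gamma> = add_mset (Atom p) K" "G = add_mset H K"
      using not_axiom by (auto simp: add_eq_conv_ex)
    with id wfN show ?case by (auto intro: GWFs.id)
  next
    case (L_bot G Z)
    then obtain K where "\<Gamma> = add_mset Bot K" "G = add_mset H K"
      using not_axiom by (auto simp: add_eq_conv_ex)
    with L_bot wfN show ?case by (auto intro: GWFs.L_bot)
  next
    case (L_and X Y G Z)
    show ?case
    proof (cases "And X Y = H")
      case True
      with L_and H show ?thesis by (auto elim: left_premise.cases)
    next
      case False
      then obtain K where "\<Gamma> = add_mset (And X Y) K" "G = add_mset H K"
        using L_and.hyps(3) by (auto simp: add_eq_conv_ex)
      with L_and.hyps(2)[of "add_mset X (add_mset Y K)"] show ?thesis
        by (auto intro: GWFs.L_and simp: add_mset_commute)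
    qed
  next
    case (L_or X G Z Y)
    show ?case
    proof (cases "Or X Y = H")
      case True
      with L_or H show ?thesis by (auto elim: left_premise.cases)
    next
      case False
      then obtain K where "\<Gamma> = add_mset (Or X Y) K" "G = add_mset H K"
        using L_or.hyps(5) by (auto simp: add_eq_conv_ex)
      with L_or.hyps(2)[of "add_mset X K"] L_or.hyps(4)[of "add_mset Y K"] show ?thesis
        by (auto intro: GWFs.L_or simp: add_mset_commute)
    qed
  next
    case (L_mimp A B G Z)
    show ?case
    proof (cases "MImp A B = H")
      case True
      with L_mimp H show ?thesis by (auto elim: left_premise.cases)
    next
      case False
      then obtain K where "\<Gamma> = add_mset (MImp A B) K" "G = add_mset H K"
        using L_mimp.hyps(7) by (auto simp: add_eq_conv_ex)
      with L_mimp.hyps L_mimp.hyps(4)[of "add_mset (MImp A B) K"] L_mimp.hyps(6)[of "add_mset B K"]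
      show ?thesis by (auto intro: GWFs.L_mimp simp: add_mset_commute)
    qed
  next
    case (R_mimp A B G)
    with R_mimp.hyps(4)[of "add_mset A \<Gamma>"] show ?case
      by (auto intro: GWFs.R_mimp simp: add_mset_commute)
  next
    case (LR_imp A B C D G)
    then obtain K where "\<Gamma> = add_mset (Imp C D) K" "G = add_mset H K"
      using not_axiom(3)[of C D] by (auto simp: add_eq_conv_ex)
    with LR_imp wfN show ?case by (auto intro: GWFs.LR_imp)
  next
    case (R_imp A B)
    with wfN show ?case by (auto intro: GWFs.R_imp)
  qed (auto intro: GWFs.intros)
qed

definition contractible :: "fm \<Rightarrow> bool" where
  "contractible X \<longleftrightarrow> (\<forall>\<Gamma> Z. GWFs (add_mset X (add_mset X \<Gamma>)) Z \<longrightarrow> GWFs (add_mset X \<Gamma>) Z)"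

lemma GWFs_contract_copy:
  "\<forall>X\<in>#N. contractible X \<Longrightarrow> GWFs (N + N + \<Gamma>) Z \<Longrightarrow> GWFs (N + \<Gamma>) Z"
proof (induction N arbitrary: \<Gamma>)
  case (add X N)
  then have "GWFs (N + N + add_mset X \<Gamma>) Z"
    by (auto simp: contractible_def)
  with add.IH[of "add_mset X \<Gamma>"] add.prems(1) show ?case
    by simp
qed simp

lemma GWFs_contract_left_premise:
  assumes "left_premise H N" "\<forall>X\<in>#N. contractible X" "GWFs (N + add_mset H \<Gamma>) Z"
  shows "GWFs (N + \<Gamma>) Z"
  using assms GWFs_left_premise[of H "N + \<Gamma>" Z N] GWFs_contract_copy[of N \<Gamma> Z]
  by (simp add: add.assoc)

lemma GWFs_contract_And:
  assumes "contractible X" "contractible Y" "GWFs ({#X, Y#} + add_mset (And X Y) \<Gamma>) Z"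
  shows "GWFs (add_mset (And X Y) \<Gamma>) Z"
proof -
  have "GWFs ({#X, Y#} + \<Gamma>) Z"
    by (rule GWFs_contract_left_premise[OF _ _ assms(3)])
      (use assms(1,2) in \<open>auto intro: left_premise.intros\<close>)
  then show ?thesis
    by (simp add: GWFs.L_and)
qed

lemma GWFs_contract_Or:
  assumes "contractible X" "contractible Y"
    and "GWFs ({#X#} + add_mset (Or X Y) \<Gamma>) Z" "GWFs ({#Y#} + add_mset (Or X Y) \<Gamma>) Z"
  shows "GWFs (add_mset (Or X Y) \<Gamma>) Z"
proof -
  have "GWFs ({#X#} + \<Gamma>) Z" "GWFs ({#Y#} + \<Gamma>) Z"
    by (rule GWFs_contract_left_premise[OF _ _ assms(3)] GWFs_contract_left_premise[OF _ _ assms(4)];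
        use assms(1,2) in \<open>auto intro: left_premise.intros\<close>)+
  then show ?thesis
    by (simp add: GWFs.L_or)
qed

lemma GWFs_contract_MImp:
  assumes "isFrm A" "isFrm B" "contractible B"
    and "GWFs (add_mset (MImp A B) \<Gamma>) A" "GWFs ({#B#} + add_mset (MImp A B) \<Gamma>) Z"
  shows "GWFs (add_mset (MImp A B) \<Gamma>) Z"
proof -
  have "GWFs ({#B#} + \<Gamma>) Z"
    by (rule GWFs_contract_left_premise[OF _ _ assms(5)])
      (use assms(3) in \<open>auto intro: left_premise.intros\<close>)
  then show ?thesis
    using GWFs.L_mimp[OF assms(1,2,4)] by simp
qed

text \<open>If the contracted formula is principal, the other copy is inverted and its strictly
  smaller components are contracted.\<close>

lemma contractible_if_smaller_contractible:
  assumes smaller: "\<And>Y. size Y < size X \<Longrightarrow> contractible Y"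
  shows "contractible X"
  unfolding contractible_def
proof (intro allI impI)
  fix \<Gamma> Z
  assume "GWFs (add_mset X (add_mset X \<Gamma>)) Z"
  then show "GWFs (add_mset X \<Gamma>) Z"
  proof (induction "add_mset X (add_mset X \<Gamma>)" Z arbitrary: \<Gamma> rule: GWFs.induct)
    case (id G p)
    then obtain K where K: "add_mset X \<Gamma> = add_mset (Atom p) K" "K \<subseteq># G"
      by (metis add_mset_eq_add_mset_twice_obtain)
    have "wfms K"
      using id.hyps K(2) by (simp add: wfms_subset)
    with K show ?case by (simp add: GWFs.id)
  next
    case (L_bot G Z)
    then obtain K where K: "add_mset X \<Gamma> = add_mset Bot K" "K \<subseteq># G"
      by (metis add_mset_eq_add_mset_twice_obtain)
    have "wfms K"
      using L_bot.hyps K(2) by (simp add: wfms_subset)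
    with K L_bot.hyps show ?case by (simp add: GWFs.L_bot)
  next
    case (L_and X1 Y1 G Z)
    from L_and.hyps(3) show ?case
    proof (cases rule: add_mset_eq_add_mset_twice_cases)
      case 1
      have "contractible X1" "contractible Y1"
        using smaller[of X1] smaller[of Y1] 1 by simp_all
      moreover have "GWFs ({#X1, Y1#} + add_mset (And X1 Y1) \<Gamma>) Z"
        using L_and.hyps(1) 1 by (simp add: add_mset_commute)
      ultimately show ?thesis
        using 1 by (metis GWFs_contract_And)
    next
      case (2 K)
      have "GWFs (add_mset X1 (add_mset Y1 (add_mset X K))) Z"
        using L_and.hyps(2)[of "add_mset X1 (add_mset Y1 K)"] 2 by (simp add: add_mset_commute)
      then show ?thesis
        using 2 GWFs.L_and[of X1 Y1 "add_mset X K" Z] by (simp add: add_mset_commute)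
    qed
  next
    case (L_or X1 G Z Y1)
    from L_or.hyps(5) show ?case
    proof (cases rule: add_mset_eq_add_mset_twice_cases)
      case 1
      have "contractible X1" "contractible Y1"
        using smaller[of X1] smaller[of Y1] 1 by simp_all
      moreover have "GWFs ({#X1#} + add_mset (Or X1 Y1) \<Gamma>) Z"
        "GWFs ({#Y1#} + add_mset (Or X1 Y1) \<Gamma>) Z"
        using L_or.hyps(1,3) 1 by (simp_all add: add_mset_commute)
      ultimately show ?thesis
        using 1 by (metis GWFs_contract_Or)
    next
      case (2 K)
      have "GWFs (add_mset X1 (add_mset X K)) Z" "GWFs (add_mset Y1 (add_mset X K)) Z"
        using L_or.hyps(2)[of "add_mset X1 K"] L_or.hyps(4)[of "add_mset Y1 K"] 2
        by (simp_all add: add_mset_commute)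
      then show ?thesis
        using 2 GWFs.L_or[of X1 "add_mset X K" Z Y1] by (simp add: add_mset_commute)
    qed
  next
    case (L_mimp A B G Z)
    from L_mimp.hyps(7) show ?case
    proof (cases rule: add_mset_eq_add_mset_twice_cases)
      case 1
      have "contractible B"
        using smaller[of B] 1 by simp
      moreover have "GWFs (add_mset (MImp A B) \<Gamma>) A"
        using L_mimp.hyps(4)[of \<Gamma>] 1 by simp
      moreover have "GWFs ({#B#} + add_mset (MImp A B) \<Gamma>) Z"
        using L_mimp.hyps(5) 1 by (simp add: add_mset_commute)
      ultimately show ?thesis
        using 1 L_mimp.hyps(1,2) by (metis GWFs_contract_MImp)
    next
      case (2 K)
      have "GWFs (add_mset (MImp A B) (add_mset X K)) A" "GWFs (add_mset B (add_mset X K)) Z"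
        using L_mimp.hyps(4)[of "add_mset (MImp A B) K"] L_mimp.hyps(6)[of "add_mset B K"] 2
        by (simp_all add: add_mset_commute)
      then show ?thesis
        using 2 L_mimp.hyps(1,2) GWFs.L_mimp[of A B "add_mset X K" Z] by (simp add: add_mset_commute)
    qed
  next
    case (R_mimp A B)
    have "GWFs (add_mset A (add_mset X \<Gamma>)) B"
      using R_mimp.hyps(4)[of "add_mset A \<Gamma>"] by (simp add: add_mset_commute)
    with R_mimp.hyps(1,2) show ?case by (simp add: GWFs.R_mimp)
  next
    case (LR_imp A B C D G)
    then obtain K where K: "add_mset X \<Gamma> = add_mset (Imp C D) K" "K \<subseteq># G"
      by (metis add_mset_eq_add_mset_twice_obtain)
    have "wfms K"
      using LR_imp.hyps K(2) by (simp add: wfms_subset)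
    with K LR_imp.hyps show ?case by (simp add: GWFs.LR_imp)
  next
    case (R_and X1 Y1)
    then show ?case by (simp add: GWFs.R_and)
  next
    case (R_or_l Y1 X1)
    then show ?case by (simp add: GWFs.R_or_l)
  next
    case (R_or_r X1 Y1)
    then show ?case by (simp add: GWFs.R_or_r)
  next
    case (R_imp A B)
    then show ?case by (simp add: GWFs.R_imp)
  qed
qed

lemma contractible: "contractible X"
proof (induction "size X" arbitrary: X rule: less_induct)
  case less
  then show ?case by (blast intro: contractible_if_smaller_contractible)
qed

lemma GWFs_contract: "GWFs (add_mset X (add_mset X \<Gamma>)) Z \<Longrightarrow> GWFs (add_mset X \<Gamma>) Z"
  using contractible unfolding contractible_def by blast

lemma GWFs_contract_subset: "GWFs (M + \<Gamma>) Z \<Longrightarrow> M \<subseteq># \<Gamma> \<Longrightarrow> GWFs \<Gamma> Z"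
proof (induction M arbitrary: \<Gamma>)
  case (add X M)
  then obtain \<Gamma>' where \<Gamma>: "\<Gamma> = add_mset X \<Gamma>'"
    by (metis insert_subset_eq_iff multi_member_split)
  with add.prems(1) have "GWFs (M + \<Gamma>) Z"
    by (simp add: GWFs_contract)
  with add show ?case
    by (meson mset_subset_eq_insertD subset_mset.less_imp_le)
qed simp

definition entails_over :: "fm multiset \<Rightarrow> fm \<Rightarrow> fm \<Rightarrow> bool" where
  "entails_over \<Gamma> X Z \<longleftrightarrow> (\<forall>\<Gamma>'. \<Gamma> \<subseteq># \<Gamma>' \<longrightarrow> GWFs \<Gamma>' X \<longrightarrow> GWFs \<Gamma>' Z)"

lemma entails_overD: "entails_over \<Gamma> X Z \<Longrightarrow> GWFs \<Gamma> X \<Longrightarrow> GWFs \<Gamma> Z"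
  by (simp add: entails_over_def)

lemma entails_over_mono: "entails_over \<Gamma> X Z \<Longrightarrow> \<Gamma> \<subseteq># \<Gamma>' \<Longrightarrow> entails_over \<Gamma>' X Z"
  unfolding entails_over_def using subset_mset.order_trans by blast

definition disj_elim_valid :: "fm multiset \<Rightarrow> fm multiset \<Rightarrow> bool" where
  "disj_elim_valid \<Gamma> \<Delta> \<longleftrightarrow> wfms \<Gamma> \<longrightarrow> (\<forall>A\<in>#\<Delta>. isFrm A) \<longrightarrow>
     (\<forall>\<Sigma> Z. wfms \<Sigma> \<longrightarrow> isFrm2 Z \<longrightarrow> (\<forall>A\<in>#\<Delta>. entails_over (\<Gamma> + \<Sigma>) A Z) \<longrightarrow> GWFs (\<Gamma> + \<Sigma>) Z)"

lemma disj_elim_validD: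
  assumes "disj_elim_valid \<Gamma> \<Delta>" "wfms \<Gamma>" "\<forall>A\<in>#\<Delta>. isFrm A" "wfms \<Sigma>" "isFrm2 Z"
    and "\<forall>A\<in>#\<Delta>. entails_over T A Z" "T \<subseteq># \<Gamma> + \<Sigma>"
  shows "GWFs (\<Gamma> + \<Sigma>) Z"
  using assms entails_over_mono unfolding disj_elim_valid_def by blast

lemma disj_elim_valid_id: "wfms \<Gamma> \<Longrightarrow> disj_elim_valid (add_mset (Atom p) \<Gamma>) (add_mset (Atom p) \<Delta>)"
  unfolding disj_elim_valid_def by (auto elim!: entails_overD intro: GWFs.id)

lemma disj_elim_valid_bot: "wfms \<Gamma> \<Longrightarrow> disj_elim_valid (add_mset Bot \<Gamma>) \<Delta>"
  unfolding disj_elim_valid_def by (auto intro: GWFs.L_bot)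

text \<open>Since succedents are restricted to \<open>Frm\<close>, the rule \<open>R\<^sub>\<supset>\<close> never has to be simulated.\<close>

lemma disj_elim_valid_MImp: "disj_elim_valid \<Gamma> (add_mset (MImp A B) \<Delta>)"
  by (simp add: disj_elim_valid_def)

lemma disj_elim_valid_L_and:
  assumes "disj_elim_valid (add_mset X (add_mset Y \<Gamma>)) \<Delta>"
  shows "disj_elim_valid (add_mset (And X Y) \<Gamma>) \<Delta>"
  unfolding disj_elim_valid_def
proof (intro impI allI)
  fix \<Sigma> Z
  assume wf: "wfms (add_mset (And X Y) \<Gamma>)" "\<forall>A\<in>#\<Delta>. isFrm A" "wfms \<Sigma>" "isFrm2 Z"
    and cont: "\<forall>A\<in>#\<Delta>. entails_over (add_mset (And X Y) \<Gamma> + \<Sigma>) A Z"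
  have "GWFs (add_mset X (add_mset Y \<Gamma>) + add_mset (And X Y) \<Sigma>) Z"
    by (rule disj_elim_validD[OF assms _ _ _ _ cont]) (use wf in simp_all)
  then have "GWFs (add_mset (And X Y) (add_mset (And X Y) (\<Gamma> + \<Sigma>))) Z"
    using GWFs.L_and[of X Y "add_mset (And X Y) (\<Gamma> + \<Sigma>)"] by (simp add: add_mset_commute)
  then show "GWFs (add_mset (And X Y) \<Gamma> + \<Sigma>) Z"
    by (simp add: GWFs_contract)
qed

lemma disj_elim_valid_L_or:
  assumes "disj_elim_valid (add_mset X \<Gamma>) \<Delta>" "disj_elim_valid (add_mset Y \<Gamma>) \<Delta>"
  shows "disj_elim_valid (add_mset (Or X Y) \<Gamma>) \<Delta>"
  unfolding disj_elim_valid_def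
proof (intro impI allI)
  fix \<Sigma> Z
  assume wf: "wfms (add_mset (Or X Y) \<Gamma>)" "\<forall>A\<in>#\<Delta>. isFrm A" "wfms \<Sigma>" "isFrm2 Z"
    and cont: "\<forall>A\<in>#\<Delta>. entails_over (add_mset (Or X Y) \<Gamma> + \<Sigma>) A Z"
  have "GWFs (add_mset X \<Gamma> + add_mset (Or X Y) \<Sigma>) Z"
    by (rule disj_elim_validD[OF assms(1) _ _ _ _ cont]) (use wf in simp_all)
  moreover have "GWFs (add_mset Y \<Gamma> + add_mset (Or X Y) \<Sigma>) Z"
    by (rule disj_elim_validD[OF assms(2) _ _ _ _ cont]) (use wf in simp_all)
  ultimately have "GWFs (add_mset (Or X Y) (add_mset (Or X Y) (\<Gamma> + \<Sigma>))) Z"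
    using GWFs.L_or[of X "add_mset (Or X Y) (\<Gamma> + \<Sigma>)" Z Y] by (simp add: add_mset_commute)
  then show "GWFs (add_mset (Or X Y) \<Gamma> + \<Sigma>) Z"
    by (simp add: GWFs_contract)
qed

lemma disj_elim_valid_L_mimp:
  assumes left: "disj_elim_valid \<Gamma> (add_mset A \<Delta>)"
    and right: "disj_elim_valid (add_mset B \<Gamma>) \<Delta>"
    and AB: "isFrm A" "isFrm B"
  shows "disj_elim_valid (add_mset (MImp A B) \<Gamma>) \<Delta>"
  unfolding disj_elim_valid_def
proof (intro impI allI)
  fix \<Sigma> Z
  let ?M = "MImp A B"
  assume wf: "wfms (add_mset ?M \<Gamma>)" "\<forall>A\<in>#\<Delta>. isFrm A" "wfms \<Sigma>" "isFrm2 Z"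
    and cont: "\<forall>A\<in>#\<Delta>. entails_over (add_mset ?M \<Gamma> + \<Sigma>) A Z"
  have B_case: "GWFs (add_mset B \<Gamma> + add_mset ?M \<Sigma>) Z"
    by (rule disj_elim_validD[OF right _ _ _ _ cont]) (use wf AB in \<open>simp_all add: isFrm2_if_isFrm\<close>)
  have "entails_over (\<Gamma> + add_mset ?M \<Sigma>) A Z"
    unfolding entails_over_def
  proof (intro allI impI)
    fix P
    assume P: "\<Gamma> + add_mset ?M \<Sigma> \<subseteq># P" and "GWFs P A"
    then have wfP: "wfms P"
      using GWFs_wf by blast
    have "GWFs (add_mset ?M P) A"
      using GWFs_weaken_plus[OF \<open>GWFs P A\<close>, of "{#?M#}"] AB by (simp add: isFrm2_if_isFrm)
    moreover have "GWFs (add_mset B P) Z"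
      by (rule GWFs_weaken[OF B_case]) (use P wfP AB in \<open>simp_all add: isFrm2_if_isFrm\<close>)
    ultimately have "GWFs ({#?M#} + P) Z"
      using GWFs.L_mimp[OF AB] by simp
    moreover have "{#?M#} \<subseteq># P"
      using P by (meson mset_subset_eq_add_right single_subset_iff subset_mset.dual_order.trans union_single_eq_member)
    ultimately show "GWFs P Z"
      by (rule GWFs_contract_subset)
  qed
  then have "GWFs (\<Gamma> + add_mset ?M \<Sigma>) Z"
    by (intro disj_elim_validD[OF left _ _ _ _ _ subset_mset.order_refl])
      (use wf AB cont entails_over_mono in auto)
  then show "GWFs (add_mset ?M \<Gamma> + \<Sigma>) Z"
    by simp
qed

lemma disj_elim_valid_R_and:
  assumes X: "disj_elim_valid \<Gamma> (add_mset X \<Delta>)" and Y: "disj_elim_valid \<Gamma> (add_mset Y \<Delta>)"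
  shows "disj_elim_valid \<Gamma> (add_mset (And X Y) \<Delta>)"
  unfolding disj_elim_valid_def
proof (intro impI allI)
  fix \<Sigma> Z
  assume wf: "wfms \<Gamma>" "\<forall>A\<in>#add_mset (And X Y) \<Delta>. isFrm A" "wfms \<Sigma>" "isFrm2 Z"
    and cont: "\<forall>A\<in>#add_mset (And X Y) \<Delta>. entails_over (\<Gamma> + \<Sigma>) A Z"
  have "entails_over (\<Gamma> + \<Sigma>) Y Z"
    unfolding entails_over_def
  proof (intro allI impI)
    fix P
    assume P: "\<Gamma> + \<Sigma> \<subseteq># P" and "GWFs P Y"
    have "entails_over (\<Gamma> + P) X Z"
      unfolding entails_over_def
    proof (intro allI impI)
      fix P'
      assume P': "\<Gamma> + P \<subseteq># P'" and "GWFs P' X"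
      then have "GWFs P' Y"
        using \<open>GWFs P Y\<close> GWFs_weaken GWFs_wf
        by (meson mset_subset_eq_add_right subset_mset.order_trans)
      with \<open>GWFs P' X\<close> have "GWFs P' (And X Y)"
        by (rule GWFs.R_and)
      moreover have "\<Gamma> + \<Sigma> \<subseteq># P'"
        using P P' by (meson mset_subset_eq_add_right subset_mset.order_trans)
      ultimately show "GWFs P' Z"
        using cont by (auto simp: entails_over_def)
    qed
    moreover have "\<Gamma> + \<Sigma> \<subseteq># \<Gamma> + P"
      using P by (meson mset_subset_eq_add_right subset_mset.order_trans)
    ultimately have "GWFs (\<Gamma> + P) Z"
      using wf cont GWFs_wf[OF \<open>GWFs P Y\<close>]
      by (intro disj_elim_validD[OF X _ _ _ _ _ subset_mset.order_refl])
        (auto intro: entails_over_mono)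
    moreover have "\<Gamma> \<subseteq># P"
      using P by (meson mset_subset_eq_add_left subset_mset.order_trans)
    ultimately show "GWFs P Z"
      by (rule GWFs_contract_subset)
  qed
  then show "GWFs (\<Gamma> + \<Sigma>) Z"
    using wf cont by (intro disj_elim_validD[OF Y _ _ _ _ _ subset_mset.order_refl]) auto
qed

lemma disj_elim_valid_R_or:
  assumes "disj_elim_valid \<Gamma> (add_mset X (add_mset Y \<Delta>))"
  shows "disj_elim_valid \<Gamma> (add_mset (Or X Y) \<Delta>)"
  unfolding disj_elim_valid_def
proof (intro impI allI)
  fix \<Sigma> Z
  assume wf: "wfms \<Gamma>" "\<forall>A\<in>#add_mset (Or X Y) \<Delta>. isFrm A" "wfms \<Sigma>" "isFrm2 Z"
    and cont: "\<forall>A\<in>#add_mset (Or X Y) \<Delta>. entails_over (\<Gamma> + \<Sigma>) A Z"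
  have "isFrm2 X" "isFrm2 Y"
    using wf(2) by (auto intro: isFrm2_if_isFrm)
  then have "entails_over (\<Gamma> + \<Sigma>) X Z" "entails_over (\<Gamma> + \<Sigma>) Y Z"
    using cont by (auto simp: entails_over_def intro: GWFs.R_or_l GWFs.R_or_r)
  then show "GWFs (\<Gamma> + \<Sigma>) Z"
    using wf cont by (intro disj_elim_validD[OF assms _ _ _ _ _ subset_mset.order_refl]) auto
qed

lemma GWFs_if_disj_elim_valid: "disj_elim_valid \<Gamma> {#B#} \<Longrightarrow> wfms \<Gamma> \<Longrightarrow> isFrm B \<Longrightarrow> GWFs \<Gamma> B"
  using disj_elim_validD[of \<Gamma> "{#B#}" "{#}" B \<Gamma>]
  by (simp add: entails_over_def isFrm2_if_isFrm)

lemma disj_elim_valid_LR_imp: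
  assumes "disj_elim_valid {#MImp C D, A#} {#B#}" "isFrm A" "isFrm B" "isFrm C" "isFrm D" "wfms \<Gamma>"
  shows "disj_elim_valid (add_mset (Imp C D) \<Gamma>) (add_mset (Imp A B) \<Delta>)"
proof -
  have "GWFs {#MImp C D, A#} B"
    using assms by (intro GWFs_if_disj_elim_valid) (simp_all add: isFrm2_if_isFrm)
  then show ?thesis
    using assms unfolding disj_elim_valid_def by (auto elim!: entails_overD intro: GWFs.LR_imp)
qed

lemma disj_elim_valid_R_imp:
  assumes "disj_elim_valid {#A#} {#B#}" "isFrm A" "isFrm B" "wfms \<Gamma>"
  shows "disj_elim_valid \<Gamma> (add_mset (Imp A B) \<Delta>)"
proof -
  have "GWFs {#A#} B"
    using assms by (intro GWFs_if_disj_elim_valid) (simp_all add: isFrm2_if_isFrm)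
  then show ?thesis
    using assms unfolding disj_elim_valid_def by (auto elim!: entails_overD intro: GWFs.R_imp)
qed

lemma disj_elim_valid_if_GWF: "GWF \<Gamma> \<Delta> \<Longrightarrow> disj_elim_valid \<Gamma> \<Delta>"
proof (induction rule: GWF.induct)
  case (id \<Gamma> \<Delta> p)
  from id.hyps(1) show ?case by (rule disj_elim_valid_id)
next
  case (L_bot \<Gamma> \<Delta>)
  from L_bot.hyps(1) show ?case by (rule disj_elim_valid_bot)
next
  case (L_and X Y \<Gamma> \<Delta>)
  from L_and.IH show ?case by (rule disj_elim_valid_L_and)
next
  case (R_and \<Gamma> X \<Delta> Y)
  from R_and.IH show ?case by (rule disj_elim_valid_R_and)
next
  case (L_or X \<Gamma> \<Delta> Y)
  from L_or.IH show ?case by (rule disj_elim_valid_L_or)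
next
  case (R_or \<Gamma> X Y \<Delta>)
  from R_or.IH show ?case by (rule disj_elim_valid_R_or)
next
  case (L_mimp A B \<Gamma> \<Delta>)
  from L_mimp.IH L_mimp.hyps(1,2) show ?case by (rule disj_elim_valid_L_mimp)
next
  case (R_mimp A B \<Gamma> \<Delta>)
  show ?case by (rule disj_elim_valid_MImp)
next
  case (LR_imp A B C D \<Gamma> \<Delta>)
  from LR_imp.IH LR_imp.hyps(1-5) show ?case by (rule disj_elim_valid_LR_imp)
next
  case (R_imp A B \<Gamma> \<Delta>)
  from R_imp.IH R_imp.hyps(1-3) show ?case by (rule disj_elim_valid_R_imp)
qed

lemma isFrm_bigOr: "\<forall>A\<in>set ds. isFrm A \<Longrightarrow> isFrm (bigOr ds)"
  by (induction ds rule: bigOr.induct) auto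

lemma GWFs_bigOr_intro:
  "\<forall>A\<in>set ds. isFrm A \<Longrightarrow> A \<in> set ds \<Longrightarrow> GWFs \<Gamma> A \<Longrightarrow> GWFs \<Gamma> (bigOr ds)"
proof (induction ds rule: bigOr.induct)
  case (3 A' B ds)
  have "isFrm2 A'" "isFrm2 (bigOr (B # ds))"
    using "3.prems"(1) isFrm_bigOr[of "B # ds"] by (auto intro: isFrm2_if_isFrm)
  with 3 show ?case
    by (cases "A = A'") (auto intro: GWFs.R_or_l GWFs.R_or_r)
qed auto

theorem theorem5p6:
  assumes "wfms \<Gamma>"
    and "\<forall>A\<in>#\<Delta>. isFrm A"
    and "GWF \<Gamma> \<Delta>"
    and "mset ds = \<Delta>"
  shows "GWFs \<Gamma> (bigOr ds)"
proof -
  have ds: "\<forall>A\<in>set ds. isFrm A"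
    using assms(2,4) by auto
  have "\<forall>A\<in>#\<Delta>. entails_over \<Gamma> A (bigOr ds)"
    using assms(4) GWFs_bigOr_intro[OF ds] by (auto simp: entails_over_def)
  then have "GWFs (\<Gamma> + {#}) (bigOr ds)"
    using assms(1,2) isFrm_bigOr[OF ds]
    by (intro disj_elim_validD[OF disj_elim_valid_if_GWF[OF assms(3)]]) (auto intro: isFrm2_if_isFrm)
  then show ?thesis
    by simp
qed

end
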